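(* Let $T_t$ be the special flow over the dyadic odometer on $M=[0,1)^2$. Let $(p_n)$ be natural numbers with $p_{n+1}\ge p_n+2$, let $d_n\in(0,1/2)$, $a_n>0$, and assume $$\sum_{m=n+1}^\infty a_m=o(a_nd_n)\quad (n\to\infty),\qquad 2^{p_n-2}<d_m2^{p_m-1}\ \text{ for all } m>n .$$ Put $L_n=d_n2^{p_n-1}$ and define $f_n:[0,2^{-p_n})\times[0,2^{p_n})\to\mathbb{R}$ by $f_n(u,v)=a_n$ if $0\le v<L_n$, $f_n(u,v)=-a_n$ if $2^{p_n-1}\le v<2^{p_n-1}+L_n$, and $f_n(u,v)=0$ otherwise. Let $f(x,y)=\sum_{n=1}^\infty f_n(\Phi_{p_n}^{-1}(x,y))$ and $t_n=2^{p_n-2}$. Then $f\in L_1(M)$ has zero mean and $$\sup_{(x,y)\in M}|A(f,t_n,(x,y))|=\mathcal{O}(a_nd_n)\quad (n\to\infty).$$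
   Context: Dyadic odometer: $S:[0,1)\to[0,1)$ defined on $x=\sum_{i\ge1}x_i2^{-i}$ (binary expansion, not eventually all $1$) by: if $x_1=\dots=x_m=1$ and $x_{m+1}=0$ ($m\ge0$), then $S$ replaces these first $m+1$ digits by $0,\dots,0,1$, other digits unchanged. The special flow over $S$ with constant return time $1$ is the flow on $M=[0,1)^2$ given by $T_t(x,y)=(S^{\lfloor y+t\rfloor}x,\ y+t-\lfloor y+t\rfloor)$, $t\ge0$, preserving Lebesgue measure $m$. For $p\in\mathbb{N}$, $\Phi_p:[0,2^{-p})\times[0,2^p)\to M$, $\Phi_p(u,v)=T_v(u,0)$, is a measure-preserving bijection (mod 0). Birkhoff average: $A(f,t,z)=\frac1t\int_0^t f(T_sz)\,ds$. *)

theory Defs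
  imports "HOL-Analysis.Analysis" "HOL-Library.Landau_Symbols"
begin

text \<open>i-th binary digit (i \<ge> 1) of x in [0,1); this is the expansion not eventually all 1.\<close>
definition bdigit :: "nat \<Rightarrow> real \<Rightarrow> int" where
  "bdigit i x = \<lfloor>2 ^ i * x\<rfloor> mod 2"

text \<open>Dyadic odometer: if x_1 = ... = x_m = 1 and x_(m+1) = 0, the first m+1 digits
  1,...,1,0 are replaced by 0,...,0,1, other digits unchanged.\<close>
definition odo :: "real \<Rightarrow> real" where
  "odo x = (let m = (LEAST m. bdigit (Suc m) x = 0)
            in x - (\<Sum>i\<in>{1..m}. (1/2) ^ i) + (1/2) ^ (Suc m))"

definition Mset :: "(real \<times> real) set" where
  "Mset = {0..<1} \<times> {0..<1}"

text \<open>Special flow over the odometer with constant roof 1 (for t \<ge> 0).\<close>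
definition flow :: "real \<Rightarrow> real \<times> real \<Rightarrow> real \<times> real" where
  "flow t z = ((odo ^^ nat \<lfloor>snd z + t\<rfloor>) (fst z), frac (snd z + t))"

definition Phi_dom :: "nat \<Rightarrow> (real \<times> real) set" where
  "Phi_dom p = {0..<(1/2) ^ p} \<times> {0..<2 ^ p}"

definition Phi :: "nat \<Rightarrow> real \<times> real \<Rightarrow> real \<times> real" where
  "Phi p uv = flow (snd uv) (fst uv, 0)"

definition Phi_inv :: "nat \<Rightarrow> real \<times> real \<Rightarrow> real \<times> real" where
  "Phi_inv p = inv_into (Phi_dom p) (Phi p)"

definition birk :: "(real \<times> real \<Rightarrow> real) \<Rightarrow> real \<Rightarrow> real \<times> real \<Rightarrow> real" where
  "birk f t z = (1 / t) * (LBINT s=0..t. f (flow s z))"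

definition fpiece :: "real \<Rightarrow> real \<Rightarrow> nat \<Rightarrow> real \<times> real \<Rightarrow> real" where
  "fpiece a d p uv =
     (let v = snd uv; L = d * 2 powr (real p - 1); H = 2 powr (real p - 1) in
      if 0 \<le> v \<and> v < L then a
      else if H \<le> v \<and> v < H + L then - a
      else 0)"

definition ffun :: "(nat \<Rightarrow> real) \<Rightarrow> (nat \<Rightarrow> real) \<Rightarrow> (nat \<Rightarrow> nat) \<Rightarrow> real \<times> real \<Rightarrow> real" where
  "ffun a d p z = (\<Sum>n. fpiece (a n) (d n) (p n) (Phi_inv (p n) z))"

end

(*
  The p-th Rokhlin tower of the odometer has 2^p levels, and the height of a point z = (x, y)
  in it, h_p(z) = (level of x) + y in [0, 2^p), is the second coordinate of Phi_p^-1(z).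
  The flow translates h_p modulo 2^p, so f(z) = sum_n g_n(h_(p_n)(z)) with profiles g_n that
  are antiperiodic: g_n(v + 2^(p_n - 1)) = -g_n(v).

  Antiperiodicity and the equidistribution of the levels give mean zero. Along an orbit, the
  integral of g_m over any time window of length a multiple of 2^(p_m) vanishes. For m < n the
  time t_n = 2^(p_n - 2) is such a multiple, so only the n-th term (at most 4 a_n L_n = 8 t_n a_n d_n)
  and the tail (at most t_n times the sum of a_m over m > n) remain.
*)
theory Submission
  imports Defs "HOL-Library.Real_Mod"
begin

section \<open>Binary digits and the odometer\<close>

lemma floor_double: "\<lfloor>2 * y\<rfloor> = 2 * \<lfloor>y\<rfloor> + \<lfloor>2 * y\<rfloor> mod 2" for y :: real
proof -
  have "2 * \<lfloor>y\<rfloor> \<le> \<lfloor>2 * y\<rfloor>" "\<lfloor>2 * y\<rfloor> \<le> 2 * \<lfloor>y\<rfloor> + 1"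
    by linarith+
  then show ?thesis by presburger
qed

lemma bdigit_zero_exists:
  assumes "x \<in> {0..<1}"
  shows "\<exists>m. bdigit (Suc m) x = 0"
proof (rule ccontr)
  assume "\<nexists>m. bdigit (Suc m) x = 0"
  then have ones: "bdigit (Suc i) x = 1" for i
    unfolding bdigit_def by (metis not_mod_2_eq_0_eq_1)
  have floors: "\<lfloor>2 ^ i * x\<rfloor> = 2 ^ i - 1" for i
  proof (induction i)
    case 0
    then show ?case using assms by (simp add: floor_eq_iff)
  next
    case (Suc i)
    have "\<lfloor>2 ^ Suc i * x\<rfloor> = 2 * \<lfloor>2 ^ i * x\<rfloor> + bdigit (Suc i) x"
      using floor_double[of "2 ^ i * x"] unfolding bdigit_def by (simp add: mult.assoc)
    then show ?case using Suc ones[of i] by simp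
  qed
  obtain i where i: "(1/2::real) ^ i < 1 - x"
    using assms real_arch_pow_inv[of "1 - x" "1/2"] by auto
  have "(2::real) ^ i - 1 \<le> 2 ^ i * x"
    using floors[of i] of_int_floor_le[of "2 ^ i * x"] by simp
  then have "1 - (1/2) ^ i \<le> x"
    by (simp add: field_simps)
  with i show False by simp
qed

lemma bdigit_1_lower: "x \<in> {0..<1/2} \<Longrightarrow> bdigit 1 x = 0"
  unfolding bdigit_def by (simp add: floor_eq_iff)

lemma bdigit_1_upper: "x \<in> {1/2..<1} \<Longrightarrow> bdigit 1 x = 1"
proof -
  assume "x \<in> {1/2..<1}"
  then have "\<lfloor>2 * x\<rfloor> = 1" by (simp add: floor_eq_iff)
  then show ?thesis unfolding bdigit_def by simp
qed

lemma bdigit_Suc_Suc: "bdigit (Suc (Suc i)) x = bdigit (Suc i) (2 * x - 1)"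
proof -
  have "(2::real) ^ Suc (Suc i) * x = 2 ^ Suc i * (2 * x - 1) + of_int (2 ^ Suc i)"
    by (simp add: algebra_simps)
  then have "\<lfloor>(2::real) ^ Suc (Suc i) * x\<rfloor> = \<lfloor>2 ^ Suc i * (2 * x - 1)\<rfloor> + 2 ^ Suc i"
    by (metis floor_add_int)
  then show ?thesis unfolding bdigit_def by simp
qed

definition odo_carry :: "real \<Rightarrow> nat" where
  "odo_carry x = (LEAST m. bdigit (Suc m) x = 0)"

lemma odo_eq_carry: "odo x = x - 1 + 3/2 * (1/2) ^ odo_carry x"
proof -
  have geometric: "(\<Sum>i\<in>{1..m}. (1/2::real) ^ i) = 1 - (1/2) ^ m" for m
    by (induction m) auto
  show ?thesis unfolding odo_def odo_carry_def Let_def geometric by simp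
qed

lemma odo_carry_lower: "x \<in> {0..<1/2} \<Longrightarrow> odo_carry x = 0"
  unfolding odo_carry_def using bdigit_1_lower by (intro Least_eq_0) simp

lemma odo_carry_upper:
  assumes "x \<in> {1/2..<1}"
  shows "odo_carry x = Suc (odo_carry (2 * x - 1))"
proof -
  obtain n where "bdigit (Suc n) x = 0"
    using bdigit_zero_exists[of x] assms by auto
  then have "odo_carry x = Suc (LEAST m. bdigit (Suc (Suc m)) x = 0)"
    unfolding odo_carry_def using bdigit_1_upper[OF assms] by (intro Least_Suc) auto
  then show ?thesis
    unfolding odo_carry_def bdigit_Suc_Suc .
qed

lemma odo_lower: "x \<in> {0..<1/2} \<Longrightarrow> odo x = x + 1/2"
  using odo_carry_lower odo_eq_carry by simp

lemma odo_upper: "x \<in> {1/2..<1} \<Longrightarrow> odo x = odo (2 * x - 1) / 2"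
  using odo_carry_upper[of x] odo_eq_carry[of x] odo_eq_carry[of "2 * x - 1"] by simp

lemma odo_in_unit: "x \<in> {0..<1} \<Longrightarrow> odo x \<in> {0..<1}"
proof (induction "odo_carry x" arbitrary: x)
  case 0
  then have "x < 1/2" using odo_carry_upper[of x] by fastforce
  then show ?case using odo_lower 0 by simp
next
  case (Suc m)
  then have x: "x \<in> {1/2..<1}" using odo_carry_lower[of x] by fastforce
  then have "odo (2 * x - 1) \<in> {0..<1}"
    using Suc odo_carry_upper[OF x] by simp
  then show ?case using odo_upper[OF x] by simp
qed

lemma odo_funpow_in_unit: "x \<in> {0..<1} \<Longrightarrow> (odo ^^ k) x \<in> {0..<1}"
  by (induction k) (simp_all add: odo_in_unit del: atLeastLessThan_iff)

text \<open>In binary, \<open>odo_level p x = x\<^sub>1 + 2 x\<^sub>2 + \<dots> + 2\<^sup>p\<^sup>-\<^sup>1 x\<^sub>p\<close> is the level of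
  the Rokhlin tower of height \<open>2\<^sup>p\<close> over \<open>[0, 2\<^sup>-\<^sup>p)\<close> that contains \<open>x\<close>, and
  \<open>odo_shift p x = 2\<^sup>p x mod 1\<close> is the position of \<open>x\<close> inside that level. The odometer
  raises the level by one modulo \<open>2\<^sup>p\<close> and keeps the position below the top level.\<close>

fun odo_level :: "nat \<Rightarrow> real \<Rightarrow> nat" where
  "odo_level 0 x = 0"
| "odo_level (Suc p) x =
     (if x < 1/2 then 2 * odo_level p (2 * x) else 1 + 2 * odo_level p (2 * x - 1))"

fun odo_shift :: "nat \<Rightarrow> real \<Rightarrow> real" where
  "odo_shift 0 x = x"
| "odo_shift (Suc p) x = (if x < 1/2 then odo_shift p (2 * x) else odo_shift p (2 * x - 1))"

lemma odo_level_less: "odo_level p x < 2 ^ p"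
proof (induction p arbitrary: x)
  case (Suc p)
  have "odo_level p (2 * x) < 2 ^ p" "odo_level p (2 * x - 1) < 2 ^ p"
    using Suc.IH by auto
  then show ?case by auto
qed simp

lemma odo_level_odo: "x \<in> {0..<1} \<Longrightarrow> odo_level p (odo x) = (odo_level p x + 1) mod 2 ^ p"
proof (induction p arbitrary: x)
  case 0
  then show ?case by simp
next
  case (Suc p)
  show ?case
  proof (cases "x < 1/2")
    case True
    then have "odo x = x + 1/2" using odo_lower Suc.prems by simp
    moreover have "2 * odo_level p (2 * x) + 1 < 2 ^ Suc p"
      using odo_level_less[of p "2 * x"] by simp
    ultimately show ?thesis using True Suc.prems by simp
  next
    case False
    let ?y = "2 * x - 1"
    have x: "x \<in> {1/2..<1}" and y: "?y \<in> {0..<1}" using False Suc.prems by auto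
    have "odo ?y \<in> {0..<1}" using odo_in_unit[OF y] .
    then have "odo x < 1/2" and "2 * odo x = odo ?y" using odo_upper[OF x] by auto
    then have "odo_level (Suc p) (odo x) = 2 * ((odo_level p ?y + 1) mod 2 ^ p)"
      using Suc.IH[OF y] by simp
    also have "\<dots> = (odo_level (Suc p) x + 1) mod 2 ^ Suc p"
      using False by (simp add: mult_mod_right)
    finally show ?thesis .
  qed
qed

lemma odo_shift_odo:
  "x \<in> {0..<1} \<Longrightarrow> odo_level p x + 1 < 2 ^ p \<Longrightarrow> odo_shift p (odo x) = odo_shift p x"
proof (induction p arbitrary: x)
  case 0
  then show ?case by simp
next
  case (Suc p)
  show ?case
  proof (cases "x < 1/2")
    case True
    then show ?thesis using odo_lower Suc.prems by simp
  next
    case False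
    let ?y = "2 * x - 1"
    have x: "x \<in> {1/2..<1}" and y: "?y \<in> {0..<1}" using False Suc.prems by auto
    have "odo ?y \<in> {0..<1}" using odo_in_unit[OF y] .
    then have "odo x < 1/2" and "2 * odo x = odo ?y" using odo_upper[OF x] by auto
    moreover have "odo_level p ?y + 1 < 2 ^ p" using False Suc.prems(2) by simp
    ultimately show ?thesis using Suc.IH[OF y] False by simp
  qed
qed

lemma odo_level_funpow:
  "x \<in> {0..<1} \<Longrightarrow> odo_level p ((odo ^^ k) x) = (odo_level p x + k) mod 2 ^ p"
proof (induction k)
  case 0
  then show ?case by (simp add: odo_level_less)
next
  case (Suc k)
  then show ?case
    using odo_level_odo[OF odo_funpow_in_unit[OF Suc.prems]] by (simp add: mod_Suc_eq)
qed

lemma odo_shift_funpow: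
  "x \<in> {0..<1} \<Longrightarrow> odo_level p x + k < 2 ^ p \<Longrightarrow> odo_shift p ((odo ^^ k) x) = odo_shift p x"
proof (induction k)
  case 0
  then show ?case by simp
next
  case (Suc k)
  have "odo_level p ((odo ^^ k) x) + 1 < 2 ^ p"
    using odo_level_funpow[OF Suc.prems(1)] Suc.prems(2) by simp
  then show ?case
    using odo_shift_odo[OF odo_funpow_in_unit[OF Suc.prems(1)]] Suc by simp
qed

lemma odo_level_base: "u \<in> {0..<(1/2) ^ p} \<Longrightarrow> odo_level p u = 0"
proof (induction p arbitrary: u)
  case 0
  then show ?case by simp
next
  case (Suc p)
  have "(1/2::real) ^ p \<le> 1" by (simp add: power_le_one)
  then show ?case using Suc by simp
qed

lemma odo_shift_base: "t \<in> {0..<1} \<Longrightarrow> odo_shift p (t * (1/2) ^ p) = t"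
proof (induction p)
  case 0
  then show ?case by simp
next
  case (Suc p)
  have "t * (1/2) ^ p \<le> t" using Suc.prems by (simp add: mult_left_le power_le_one)
  then show ?case using Suc by simp
qed

lemma odo_shift_in_unit: "x \<in> {0..<1} \<Longrightarrow> odo_shift p x \<in> {0..<1}"
  by (induction p arbitrary: x) auto

lemma odo_level_shift_inj:
  assumes "x \<in> {0..<1}" "y \<in> {0..<1}"
    and "odo_level p x = odo_level p y" "odo_shift p x = odo_shift p y"
  shows "x = y"
  using assms
proof (induction p arbitrary: x y)
  case 0
  then show ?case by simp
next
  case (Suc p)
  consider "x < 1/2" "y < 1/2" | "\<not> x < 1/2" "\<not> y < 1/2" | "x < 1/2 \<longleftrightarrow> \<not> y < 1/2"
    by blast
  then show ?case
  proof cases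
    case 1
    then show ?thesis using Suc.IH[of "2 * x" "2 * y"] Suc.prems by simp
  next
    case 2
    then show ?thesis using Suc.IH[of "2 * x - 1" "2 * y - 1"] Suc.prems by simp
  next
    case 3
    then have "odd (odo_level (Suc p) x) \<noteq> odd (odo_level (Suc p) y)" by auto
    then show ?thesis using Suc.prems(3) by simp
  qed
qed

section \<open>Rokhlin towers and the maps \<open>\<Phi>\<^sub>p\<close>\<close>

lemma real_add_one_le_two_power: "n < 2 ^ q \<Longrightarrow> real n + 1 \<le> 2 ^ q"
proof -
  assume "n < 2 ^ q"
  then have "real (Suc n) \<le> real ((2::nat) ^ q)" by (intro of_nat_mono) simp
  then show ?thesis by simp
qed

definition tower_height :: "nat \<Rightarrow> real \<times> real \<Rightarrow> real" where
  "tower_height p z = real (odo_level p (fst z)) + snd z"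

lemma tower_height_range: "z \<in> Mset \<Longrightarrow> tower_height p z \<in> {0..<2 ^ p}"
proof -
  assume "z \<in> Mset"
  moreover have "real (odo_level p (fst z)) + 1 \<le> 2 ^ p"
    by (rule real_add_one_le_two_power[OF odo_level_less])
  ultimately show ?thesis unfolding tower_height_def Mset_def by auto
qed

lemma in_unit_if_below_half_power: "u \<in> {0..<(1/2::real) ^ p} \<Longrightarrow> u \<in> {0..<1}"
  using power_le_one[of "1/2::real" p] by auto

lemma Phi_Pair: "Phi p (u, v) = ((odo ^^ nat \<lfloor>v\<rfloor>) u, frac v)"
  unfolding Phi_def flow_def by simp

lemma Phi_tower_point:
  assumes z: "z \<in> Mset"
  shows "(odo_shift p (fst z) * (1/2) ^ p, tower_height p z) \<in> Phi_dom p"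
    and "Phi p (odo_shift p (fst z) * (1/2) ^ p, tower_height p z) = z"
proof -
  let ?x = "fst z" and ?y = "snd z"
  let ?u = "odo_shift p ?x * (1/2) ^ p" and ?k = "odo_level p ?x"
  have x: "?x \<in> {0..<1}" and y: "?y \<in> {0..<1}"
    using z unfolding Mset_def by auto
  have shift: "odo_shift p ?x \<in> {0..<1}" using odo_shift_in_unit[OF x] .
  then have u: "?u \<in> {0..<(1/2) ^ p}" by simp
  then have u1: "?u \<in> {0..<1}" by (rule in_unit_if_below_half_power)
  have "odo_level p ((odo ^^ ?k) ?u) = ?k" "odo_shift p ((odo ^^ ?k) ?u) = odo_shift p ?x"
    using odo_level_funpow[OF u1] odo_shift_funpow[OF u1] odo_level_base[OF u]
      odo_shift_base[OF shift] odo_level_less[of p ?x] by simp_all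
  then have "(odo ^^ ?k) ?u = ?x"
    using odo_level_shift_inj odo_funpow_in_unit[OF u1] x by blast
  moreover have "\<lfloor>tower_height p z\<rfloor> = int ?k" "frac (tower_height p z) = ?y"
    using y by (simp_all add: tower_height_def floor_eq_iff frac_def)
  ultimately show "Phi p (?u, tower_height p z) = z"
    by (simp add: Phi_Pair)
  show "(?u, tower_height p z) \<in> Phi_dom p"
    using u tower_height_range[OF z] by (simp add: Phi_dom_def)
qed

lemma snd_eq_tower_height_if_Phi:
  assumes "w \<in> Phi_dom p" "Phi p w = z"
  shows "snd w = tower_height p z"
proof -
  obtain u v where w: "w = (u, v)" "u \<in> {0..<(1/2) ^ p}" "v \<in> {0..<2 ^ p}"
    using assms(1) unfolding Phi_dom_def by auto
  have "u \<in> {0..<1}" using w(2) by (rule in_unit_if_below_half_power)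
  have "nat \<lfloor>v\<rfloor> < 2 ^ p" using w(3) by (simp add: nat_less_iff floor_less_iff)
  moreover have z: "z = ((odo ^^ nat \<lfloor>v\<rfloor>) u, frac v)"
    using assms(2) w(1) by (simp add: Phi_Pair)
  ultimately have "odo_level p (fst z) = nat \<lfloor>v\<rfloor>"
    using odo_level_funpow[OF \<open>u \<in> {0..<1}\<close>] odo_level_base[OF w(2)] by simp
  then show ?thesis
    using w z by (simp add: tower_height_def frac_def)
qed

lemma snd_Phi_inv:
  assumes "z \<in> Mset"
  shows "snd (Phi_inv p z) = tower_height p z"
proof -
  have "z \<in> Phi p ` Phi_dom p" using Phi_tower_point[OF assms] by (metis image_eqI)
  then show ?thesis
    unfolding Phi_inv_def by (intro snd_eq_tower_height_if_Phi inv_into_into f_inv_into_f)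
qed

section \<open>The profiles and the mean of \<open>f\<close>\<close>

definition fprofile :: "real \<Rightarrow> real \<Rightarrow> nat \<Rightarrow> real \<Rightarrow> real" where
  "fprofile a d p v = fpiece a d p (0, v)"

lemma fpiece_eq_fprofile: "fpiece a d p uv = fprofile a d p (snd uv)"
  unfolding fprofile_def fpiece_def Let_def by simp

lemma abs_fprofile_le: "\<bar>fprofile a d p v\<bar> \<le> \<bar>a\<bar>"
  unfolding fprofile_def fpiece_def Let_def by simp

lemma fprofile_measurable [measurable]: "fprofile a d p \<in> borel_measurable borel"
proof -
  define L where "L = d * 2 powr (real p - 1)"
  define H where "H = 2 powr (real p - 1)"
  have "fprofile a d p = (\<lambda>v. if v \<in> {0..<L} then a else if v \<in> {H..<H + L} then - a else 0)"
    unfolding fprofile_def fpiece_def Let_def L_def H_def by (simp add: fun_eq_iff)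
  then show ?thesis by simp
qed

lemma fprofile_antiperiodic:
  assumes "0 < d" "d < 1" "v \<in> {0..<2 powr (real p - 1)}"
  shows "fprofile a d p (v + 2 powr (real p - 1)) = - fprofile a d p v"
proof -
  let ?H = "2 powr (real p - 1)"
  have "d * ?H < ?H" using assms(2) by simp
  moreover have "0 \<le> v" "v < ?H" using assms(3) by auto
  ultimately have "\<not> v + ?H < d * ?H" "\<not> ?H \<le> v" by linarith+
  then show ?thesis unfolding fprofile_def fpiece_def Let_def by auto
qed

lemma two_power_eq_twice_powr: "p \<ge> 1 \<Longrightarrow> (2::real) ^ p = 2 * 2 powr (real p - 1)"
  by (simp add: powr_realpow[symmetric] powr_diff)

lemma fprofile_rmod_antiperiodic:
  assumes "p \<ge> 1" "0 < d" "d < 1"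
  shows "fprofile a d p ((v + 2 powr (real p - 1)) rmod 2 ^ p) = - fprofile a d p (v rmod 2 ^ p)"
proof -
  let ?H = "2 powr (real p - 1)" and ?w = "v rmod 2 ^ p"
  have H: "(2::real) ^ p = 2 * ?H" using two_power_eq_twice_powr[OF assms(1)] .
  have w: "?w \<in> {0..<2 ^ p}" by (simp add: rmod_nonneg rmod_less)
  obtain n where v: "v = ?w + of_int n * 2 ^ p"
    unfolding rmod_def by (auto intro!: exI[of _ "\<lfloor>v / 2 ^ p\<rfloor>"])
  show ?thesis
  proof (cases "?w < ?H")
    case True
    have "(v + ?H) rmod 2 ^ p = ?w + ?H"
      by (rule rmod_unique[where n = n]) (use w True H v in auto)
    then show ?thesis using fprofile_antiperiodic[OF assms(2,3)] w True by simp
  next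
    case False
    have "(v + ?H) rmod 2 ^ p = ?w - ?H"
      by (rule rmod_unique[where n = "n + 1"]) (use w False H v in \<open>auto simp: algebra_simps\<close>)
    moreover have "?w - ?H \<in> {0..<?H}" using w False H by auto
    from fprofile_antiperiodic[OF assms(2,3) this, of a]
    have "fprofile a d p (?w - ?H) = - fprofile a d p ?w" by simp
    ultimately show ?thesis by simp
  qed
qed

lemma sum_fprofile_tower_zero:
  assumes "p \<ge> 1" "0 < d" "d < 1" "y \<in> {0..<1}"
  shows "(\<Sum>k<2 ^ p. fprofile a d p (real k + y)) = 0"
proof -
  define N :: nat where "N = 2 ^ (p - 1)"
  have pN: "(2::nat) ^ p = N + N"
    unfolding N_def using assms(1) by (metis Suc_diff_le diff_Suc_1 mult_2 power_Suc)
  have HN: "2 powr (real p - 1) = real N"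
    unfolding N_def using assms(1) by (simp add: powr_realpow[symmetric])
  let ?g = "\<lambda>k. fprofile a d p (real k + y)"
  have "(\<Sum>k<2 ^ p. ?g k) = (\<Sum>k<N. ?g k) + (\<Sum>k<N. ?g (k + N))"
    using sum.atLeastLessThan_concat[of 0 N "N + N" ?g] sum.shift_bounds_nat_ivl[of ?g 0 N N] pN
    by (simp add: atLeast0LessThan)
  also have "(\<Sum>k<N. ?g (k + N)) = (\<Sum>k<N. - ?g k)"
  proof (rule sum.cong[OF refl])
    fix k assume "k \<in> {..<N}"
    then have "real k + y \<in> {0..<2 powr (real p - 1)}" using HN assms(4) by auto
    from fprofile_antiperiodic[OF assms(2,3) this] show "?g (k + N) = - ?g k"
      using HN by (simp add: add_ac)
  qed
  finally show ?thesis by (simp add: sum_negf)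
qed

lemma has_integral_odo_level:
  fixes F :: "nat \<Rightarrow> real"
  shows "((\<lambda>x. F (odo_level p x)) has_integral (\<Sum>k<2 ^ p. F k) / 2 ^ p) {0..1}"
proof (induction p arbitrary: F)
  case 0
  show ?case using has_integral_const_real[of "F 0" 0 1] by simp
next
  case (Suc p)
  let ?F0 = "\<lambda>k. F (2 * k)" and ?F1 = "\<lambda>k. F (1 + 2 * k)"
  have lower0: "((\<lambda>x. ?F0 (odo_level p (2 * x + 0))) has_integral (\<Sum>k<2 ^ p. ?F0 k) / 2 ^ p / 2) {0..1/2}"
    using has_integral_affinity'[OF Suc.IH[of ?F0, unfolded box_real(2)[symmetric]], of 2 0]
    by (simp add: mult.commute)
  have lower: "((\<lambda>x. F (odo_level (Suc p) x)) has_integral (\<Sum>k<2 ^ p. ?F0 k) / 2 ^ p / 2) {0..1/2}"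
    by (rule has_integral_spike_finite[OF _ _ lower0, of "{1/2}"]) auto
  have upper0: "((\<lambda>x. ?F1 (odo_level p (2 * x + -1))) has_integral (\<Sum>k<2 ^ p. ?F1 k) / 2 ^ p / 2) {1/2..1}"
    using has_integral_affinity'[OF Suc.IH[of ?F1, unfolded box_real(2)[symmetric]], of 2 "-1"]
    by (simp add: mult.commute)
  have upper: "((\<lambda>x. F (odo_level (Suc p) x)) has_integral (\<Sum>k<2 ^ p. ?F1 k) / 2 ^ p / 2) {1/2..1}"
    by (rule has_integral_spike_finite[OF _ _ upper0, of "{}"]) auto
  have "(\<Sum>k<2 ^ Suc p. F k) = (\<Sum>k<2 ^ p. ?F0 k) + (\<Sum>k<2 ^ p. ?F1 k)"
    using sum_split_even_odd[where f = F and g = F and n = "2 ^ p"] by (simp add: add.commute)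
  with has_integral_combine[OF _ _ lower upper] show ?case
    by (simp add: field_simps)
qed

lemma borel_measurable_odo_level [measurable (raw)]:
  "f \<in> borel_measurable M \<Longrightarrow> (\<lambda>x. real (odo_level p (f x))) \<in> borel_measurable M"
proof -
  have "(\<lambda>x. real (odo_level p x)) \<in> borel_measurable borel"
  proof (induction p)
    case (Suc p)
    have "(\<lambda>x. real (odo_level (Suc p) x)) =
      (\<lambda>x. if x < 1/2 then 2 * real (odo_level p (2 * x)) else 1 + 2 * real (odo_level p (2 * x - 1)))"
      by auto
    also have "\<dots> \<in> borel_measurable borel"
      using measurable_compose[OF _ Suc, of "\<lambda>x. 2 * x" borel]
        measurable_compose[OF _ Suc, of "\<lambda>x. 2 * x - 1" borel] by measurable
    finally show ?case .
  qed simp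
  then show "f \<in> borel_measurable M \<Longrightarrow> ?thesis" using measurable_compose by blast
qed

lemma tower_height_measurable [measurable]: "tower_height p \<in> borel_measurable borel"
proof -
  have "tower_height p \<in> borel_measurable (borel \<Otimes>\<^sub>M borel)"
    unfolding tower_height_def by measurable
  then show ?thesis by (simp add: borel_prod)
qed

lemma Mset_borel [measurable]: "Mset \<in> sets borel"
  unfolding Mset_def by (intro borel_Times) auto

lemma emeasure_lborel_Mset: "emeasure lborel Mset = 1"
  unfolding Mset_def lborel_prod[symmetric] by (subst lborel.emeasure_pair_measure_Times) auto

lemma emeasure_lebesgue_on_Mset: "emeasure (lebesgue_on Mset) Mset = 1"
  using emeasure_lborel_Mset by (simp add: emeasure_restrict_space)

lemma borel_measurable_lebesgue_on_Mset:
  "h \<in> borel_measurable borel \<Longrightarrow> h \<in> borel_measurable (lebesgue_on Mset)"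
  by (rule measurable_restrict_space1, rule measurable_completion) simp

lemma integrable_lebesgue_on_Mset:
  fixes h :: "real \<times> real \<Rightarrow> real"
  assumes "h \<in> borel_measurable borel" "\<And>z. \<bar>h z\<bar> \<le> B"
  shows "integrable (lebesgue_on Mset) h"
  using assms emeasure_lebesgue_on_Mset borel_measurable_lebesgue_on_Mset[OF assms(1)]
  by (intro integrableI_bounded_set[where A = Mset and B = B])
     (auto simp: space_restrict_space sets_restrict_space_iff)

lemma integral_lebesgue_on_Mset_iterated:
  fixes h :: "real \<times> real \<Rightarrow> real"
  assumes h: "h \<in> borel_measurable borel" and bound: "\<And>z. \<bar>h z\<bar> \<le> B"
  shows "integral\<^sup>L (lebesgue_on Mset) h = (LINT y|lborel. LINT x|lborel. indicator Mset (x, y) * h (x, y))"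
proof -
  have "integrable lborel (\<lambda>z. indicator Mset z *\<^sub>R h z)"
    using emeasure_lborel_Mset h bound by (intro integrableI_bounded_set_indicator[where B = B]) auto
  then have int: "integrable (lborel \<Otimes>\<^sub>M lborel) (\<lambda>(x, y). indicator Mset (x, y) * h (x, y))"
    by (simp add: lborel_prod case_prod_beta')
  have "integral\<^sup>L (lebesgue_on Mset) h = integral\<^sup>L lebesgue (\<lambda>z. indicator Mset z *\<^sub>R h z)"
    by (rule integral_restrict_space) simp
  also have "\<dots> = integral\<^sup>L lborel (\<lambda>z. indicator Mset z *\<^sub>R h z)"
    by (rule integral_completion) (use h in measurable)
  also have "\<dots> = integral\<^sup>L (lborel \<Otimes>\<^sub>M lborel) (\<lambda>(x, y). indicator Mset (x, y) * h (x, y))"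
    by (simp add: lborel_prod case_prod_beta')
  also have "\<dots> = (LINT y|lborel. LINT x|lborel. indicator Mset (x, y) * h (x, y))"
    by (rule lborel_pair.integral_snd[OF int, symmetric])
  finally show ?thesis .
qed

lemma set_integrable_Icc_bounded:
  fixes f :: "real \<Rightarrow> real"
  assumes "f \<in> borel_measurable borel" "\<And>x. \<bar>f x\<bar> \<le> B"
  shows "set_integrable lborel {a..b} f"
  unfolding set_integrable_def
  by (rule integrableI_bounded_set_indicator[where B = B]) (use assms in \<open>auto simp: emeasure_lborel_Icc_eq\<close>)

lemma integral_fprofile_tower_height_zero:
  assumes "p \<ge> 1" "0 < d" "d < 1"
  shows "integral\<^sup>L (lebesgue_on Mset) (\<lambda>z. fprofile a d p (tower_height p z)) = 0"
proof -
  let ?g = "\<lambda>x y. fprofile a d p (real (odo_level p x) + y)"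
  have "(LINT x|lborel. indicator Mset (x, y) * ?g x y) = 0" for y
  proof (cases "y \<in> {0..<1}")
    case True
    have "(LINT x|lborel. indicator Mset (x, y) * ?g x y) = (LINT x:{0..1}|lborel. ?g x y)"
      unfolding set_lebesgue_integral_def using True
      by (intro integral_discrete_difference[where X = "{1}"]) (auto simp: Mset_def indicator_def)
    also have "\<dots> = integral {0..1} (\<lambda>x. ?g x y)"
      by (intro set_borel_integral_eq_integral(2) set_integrable_Icc_bounded[where B = "\<bar>a\<bar>"])
        (simp_all add: abs_fprofile_le)
    also have "\<dots> = 0"
      using integral_unique[OF has_integral_odo_level[of "\<lambda>k. fprofile a d p (real k + y)" p]]
        sum_fprofile_tower_zero[OF assms True] by simp
    finally show ?thesis .
  qed (simp add: Mset_def)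
  moreover have "integral\<^sup>L (lebesgue_on Mset) (\<lambda>z. fprofile a d p (tower_height p z)) =
      (LINT y|lborel. LINT x|lborel. indicator Mset (x, y) * fprofile a d p (tower_height p (x, y)))"
    by (rule integral_lebesgue_on_Mset_iterated[where B = "\<bar>a\<bar>"]) (simp_all add: abs_fprofile_le)
  ultimately show ?thesis by (simp add: tower_height_def)
qed

lemma ffun_eq_suminf:
  "z \<in> Mset \<Longrightarrow> ffun a d p z = (\<Sum>n. fprofile (a n) (d n) (p n) (tower_height (p n) z))"
  unfolding ffun_def fpiece_eq_fprofile by (simp add: snd_Phi_inv)

lemma ffun_integrable_mean_zero:
  assumes p: "\<And>n. p n \<ge> 1" and d: "\<And>n. 0 < d n \<and> d n < 1" and a: "summable (\<lambda>n. \<bar>a n\<bar>)"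
  shows "integrable (lebesgue_on Mset) (ffun a d p) \<and> integral\<^sup>L (lebesgue_on Mset) (ffun a d p) = 0"
proof -
  let ?M = "lebesgue_on Mset"
  define h where "h n z = fprofile (a n) (d n) (p n) (tower_height (p n) z)" for n z
  have h_bound: "\<bar>h n z\<bar> \<le> \<bar>a n\<bar>" for n z
    unfolding h_def by (rule abs_fprofile_le)
  have h_int: "integrable ?M (h n)" for n
    unfolding h_def by (rule integrable_lebesgue_on_Mset[where B = "\<bar>a n\<bar>"]) (simp_all add: abs_fprofile_le)
  have "(LINT z|?M. norm (h n z)) \<le> (LINT z|?M. \<bar>a n\<bar>)" for n
    using h_bound h_int integrable_lebesgue_on_Mset[of "\<lambda>_. \<bar>a n\<bar>" "\<bar>a n\<bar>"]
    by (intro integral_mono) auto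
  also have "(LINT z|?M. \<bar>a n\<bar>) = \<bar>a n\<bar>" for n
    using emeasure_lebesgue_on_Mset by (simp add: measure_def space_restrict_space)
  finally have h_norm_summable: "summable (\<lambda>n. LINT z|?M. norm (h n z))"
    by (intro summable_comparison_test[OF _ a]) auto
  have h_summable: "AE z in ?M. summable (\<lambda>n. norm (h n z))"
    using h_bound by (intro AE_I2 summable_comparison_test[OF _ a]) auto
  have "integrable ?M (ffun a d p) \<longleftrightarrow> integrable ?M (\<lambda>z. \<Sum>n. h n z)"
    by (intro Bochner_Integration.integrable_cong) (auto simp: space_restrict_space ffun_eq_suminf h_def)
  moreover have "integral\<^sup>L ?M (ffun a d p) = integral\<^sup>L ?M (\<lambda>z. \<Sum>n. h n z)"
    by (intro Bochner_Integration.integral_cong) (auto simp: space_restrict_space ffun_eq_suminf h_def)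
  moreover have "integral\<^sup>L ?M (h n) = 0" for n
    unfolding h_def using p d by (intro integral_fprofile_tower_height_zero) auto
  ultimately show ?thesis
    using integrable_suminf[OF h_int h_summable h_norm_summable]
      integral_suminf[OF h_int h_summable h_norm_summable] by simp
qed

section \<open>Birkhoff averages along the flow\<close>

lemma flow_in_Mset: "z \<in> Mset \<Longrightarrow> 0 \<le> s \<Longrightarrow> flow s z \<in> Mset"
  using odo_funpow_in_unit[of "fst z"] frac_lt_1 frac_ge_0 unfolding flow_def Mset_def by auto

lemma tower_height_flow:
  assumes z: "z \<in> Mset" and s: "0 \<le> s"
  shows "tower_height q (flow s z) = (tower_height q z + s) rmod 2 ^ q"
proof -
  let ?x = "fst z" and ?y = "snd z"
  let ?k = "nat \<lfloor>?y + s\<rfloor>"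
  let ?N = "odo_level q ?x + ?k"
  have x: "?x \<in> {0..<1}" and "0 \<le> ?y" using z unfolding Mset_def by auto
  then have k: "real ?k = of_int \<lfloor>?y + s\<rfloor>" using s by simp
  have lhs: "tower_height q (flow s z) = real (?N mod 2 ^ q) + frac (?y + s)"
    unfolding tower_height_def flow_def using odo_level_funpow[OF x] by simp
  have "real (?N mod 2 ^ q) + 1 \<le> 2 ^ q" by (simp add: real_add_one_le_two_power)
  then have "real (?N mod 2 ^ q) + frac (?y + s) \<in> {0..<\<bar>2 ^ q\<bar>}"
    using frac_lt_1[of "?y + s"] by simp
  moreover have "tower_height q z + s = real (?N mod 2 ^ q) + frac (?y + s) + of_int (int (?N div 2 ^ q)) * 2 ^ q"
  proof -
    have "real ?N = real (?N mod 2 ^ q + ?N div 2 ^ q * 2 ^ q)" by (simp only: mod_div_mult_eq)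
    also have "\<dots> = real (?N mod 2 ^ q) + real (?N div 2 ^ q) * 2 ^ q" by simp
    finally show ?thesis using k unfolding tower_height_def frac_def by simp
  qed
  ultimately show ?thesis unfolding lhs by (rule rmod_unique[symmetric])
qed

lemma integral_antiperiodic_zero:
  fixes f :: "real \<Rightarrow> real"
  assumes anti: "\<And>s. f (s + H) = - f s" and int: "\<And>a b. f integrable_on {a..b}" and "0 \<le> H"
  shows "integral {c..c + 2 * H * real k} f = 0"
proof (induction k arbitrary: c)
  case (Suc k)
  have "integral {c + H..c + 2 * H} f = integral {c..c + H} (f \<circ> (+) H)"
    using integral_shift_Icc_real[of c "c + H" f H] by (simp add: add_ac)
  also have "\<dots> = - integral {c..c + H} f"
    using anti by (simp add: o_def add.commute)
  finally have period: "integral {c..c + 2 * H} f = 0"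
    using Henstock_Kurzweil_Integration.integral_combine[OF _ _ int, of c "c + H" "c + 2 * H"] \<open>0 \<le> H\<close> by simp
  have "integral {c..c + 2 * H * real (Suc k)} f
      = integral {c..c + 2 * H} f + integral {c + 2 * H..c + 2 * H + 2 * H * real k} f"
    using Henstock_Kurzweil_Integration.integral_combine[OF _ _ int, of c "c + 2 * H" "c + 2 * H * real (Suc k)"] \<open>0 \<le> H\<close>
    by (simp add: algebra_simps)
  then show ?case using period Suc.IH[of "c + 2 * H"] by simp
qed simp

lemma borel_measurable_rmod [measurable]: "(\<lambda>v. v rmod m) \<in> borel_measurable borel"
  unfolding rmod_def by measurable

lemma integrable_on_Icc_bounded:
  fixes f :: "real \<Rightarrow> real"
  assumes "f \<in> borel_measurable borel" "\<And>x. \<bar>f x\<bar> \<le> B"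
  shows "f integrable_on {a..b}"
  using set_borel_integral_eq_integral(1)[OF set_integrable_Icc_bounded[OF assms]] .

lemma integral_fprofile_flow_periods:
  assumes "p \<ge> 1" "0 < d" "d < 1"
  shows "integral {0..2 ^ p * real k} (\<lambda>s. fprofile a d p ((c + s) rmod 2 ^ p)) = 0"
proof -
  let ?H = "2 powr (real p - 1)"
  have "integral {0..0 + 2 * ?H * real k} (\<lambda>s. fprofile a d p ((c + s) rmod 2 ^ p)) = 0"
    using fprofile_rmod_antiperiodic[OF assms]
    by (intro integral_antiperiodic_zero integrable_on_Icc_bounded[where B = "\<bar>a\<bar>"])
       (simp_all add: add.assoc[symmetric] abs_fprofile_le)
  then show ?thesis using two_power_eq_twice_powr[OF assms(1)] by simp
qed

definition fprofile_envelope :: "real \<Rightarrow> real \<Rightarrow> nat \<Rightarrow> real \<Rightarrow> real" where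
  "fprofile_envelope a d p w = \<bar>a\<bar> * (indicator {0..<d * 2 powr (real p - 1)} w
     + indicator {2 powr (real p - 1)..<2 powr (real p - 1) + d * 2 powr (real p - 1)} w)"

lemma abs_fprofile_le_envelope: "\<bar>fprofile a d p w\<bar> \<le> fprofile_envelope a d p w"
  unfolding fprofile_def fpiece_def fprofile_envelope_def Let_def by (auto simp: indicator_def)

lemma fprofile_envelope_nonneg: "0 \<le> fprofile_envelope a d p w"
  unfolding fprofile_envelope_def by simp

lemma integral_fprofile_envelope_shift:
  assumes "0 \<le> d"
  shows "integrable lborel (\<lambda>s. fprofile_envelope a d p (e + s))"
    and "(LINT s|lborel. fprofile_envelope a d p (e + s)) = 2 * \<bar>a\<bar> * (d * 2 powr (real p - 1))"
proof -
  have "integrable lborel (indicator {x..<y} :: real \<Rightarrow> real)" for x y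
    by (cases "x \<le> y") auto
  then have int: "integrable lborel (fprofile_envelope a d p)"
    unfolding fprofile_envelope_def by (intro integrable_mult_right Bochner_Integration.integrable_add)
  then show "integrable lborel (\<lambda>s. fprofile_envelope a d p (e + s))"
    using lborel_integrable_real_affine_iff[of 1 "fprofile_envelope a d p" e] by simp
  have "(LINT w|lborel. fprofile_envelope a d p w) = 2 * \<bar>a\<bar> * (d * 2 powr (real p - 1))"
    unfolding fprofile_envelope_def using assms by (simp add: measure_def)
  then show "(LINT s|lborel. fprofile_envelope a d p (e + s)) = 2 * \<bar>a\<bar> * (d * 2 powr (real p - 1))"
    using lborel_integral_real_affine[of 1 "fprofile_envelope a d p" e] by simp
qed

lemma abs_integral_fprofile_flow_le:
  assumes "p \<ge> 1" "0 < d" "d < 1" "c \<in> {0..<2 ^ p}"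
  shows "\<bar>integral {0..2 powr (real p - 2)} (\<lambda>s. fprofile a d p ((c + s) rmod 2 ^ p))\<bar>
           \<le> 4 * \<bar>a\<bar> * (d * 2 powr (real p - 1))"
proof -
  let ?t = "2 powr (real p - 2)" and ?\<psi> = "\<lambda>s. fprofile a d p ((c + s) rmod 2 ^ p)"
  have t: "?t = 2 ^ p / 4"
    using two_power_eq_twice_powr[OF assms(1)] by (simp add: powr_diff)
  \<comment> \<open>The window \<open>c + [0, t]\<close> wraps around modulo \<open>2\<^sup>p\<close> at most once.\<close>
  define G where "G s = fprofile_envelope a d p (c + s) + fprofile_envelope a d p (c - 2 ^ p + s)" for s
  have G_int: "integrable lborel G"
    unfolding G_def using integral_fprofile_envelope_shift assms(2)
    by (intro Bochner_Integration.integrable_add) (simp_all add: add.assoc)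
  have G_integral: "(LINT s|lborel. G s) = 4 * \<bar>a\<bar> * (d * 2 powr (real p - 1))"
    unfolding G_def using integral_fprofile_envelope_shift assms(2) by (simp add: add.assoc)
  have dominated: "\<bar>indicator {0..?t} s * ?\<psi> s\<bar> \<le> G s" for s
  proof (cases "s \<in> {0..?t}")
    case True
    then have "c + s \<in> {0..<2 * 2 ^ p}" using assms(4) t by auto
    then have "(c + s) rmod 2 ^ p = c + s \<or> (c + s) rmod 2 ^ p = c - 2 ^ p + s"
    proof (cases "c + s < 2 ^ p")
      case True
      with \<open>c + s \<in> _\<close> show ?thesis by (intro disjI1 rmod_unique[where n = 0]) auto
    next
      case False
      with \<open>c + s \<in> _\<close> show ?thesis by (intro disjI2 rmod_unique[where n = 1]) auto
    qed
    then have "\<bar>?\<psi> s\<bar> \<le> G s"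
      unfolding G_def using abs_fprofile_le_envelope[of a d p "(c + s) rmod 2 ^ p"]
      by (metis add_increasing add_increasing2 fprofile_envelope_nonneg)
    then show ?thesis using True by simp
  qed (simp add: G_def fprofile_envelope_nonneg)
  have "integral {0..?t} ?\<psi> = (LINT s|lborel. indicator {0..?t} s * ?\<psi> s)"
    using set_borel_integral_eq_integral(2)[OF set_integrable_Icc_bounded[where B = "\<bar>a\<bar>"]]
    by (simp add: set_lebesgue_integral_def abs_fprofile_le)
  also have "\<bar>\<dots>\<bar> \<le> (LINT s|lborel. G s)"
    using dominated G_int set_integrable_Icc_bounded[of ?\<psi> "\<bar>a\<bar>" 0 ?t]
    by (intro integral_abs_bound_integral) (simp_all add: set_integrable_def abs_fprofile_le)
  finally show ?thesis using G_integral by simp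
qed

lemma abs_integral_Icc_le:
  fixes g :: "real \<Rightarrow> real"
  assumes "g \<in> borel_measurable borel" "\<And>s. \<bar>g s\<bar> \<le> B" "0 \<le> t"
  shows "\<bar>integral {0..t} g\<bar> \<le> t * B"
proof -
  have "norm (integral {0..t} g) \<le> integral {0..t} (\<lambda>_. B)"
    by (rule integral_norm_bound_integral) (use assms integrable_on_Icc_bounded[OF assms(1,2)] in auto)
  then show ?thesis using assms(3) by simp
qed

lemma interval_integral_suminf:
  fixes g :: "nat \<Rightarrow> real \<Rightarrow> real"
  assumes meas: "\<And>m. g m \<in> borel_measurable borel" and bound: "\<And>m s. \<bar>g m s\<bar> \<le> b m"
    and b: "summable b" and t: "0 \<le> t"
  shows "(LBINT s=0..t. (\<Sum>m. g m s)) = (\<Sum>m. integral {0..t} (g m))"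
proof -
  define F where "F m s = indicator {0..t} s * g m s" for m s
  have F_int: "integrable lborel (F m)" for m
    using set_integrable_Icc_bounded[OF meas bound] unfolding set_integrable_def F_def by simp
  have F_bound: "\<bar>F m s\<bar> \<le> indicator {0..t} s * b m" for m s
    unfolding F_def using bound[of m s] by (simp add: abs_mult indicator_def)
  have ind_int: "integrable lborel (\<lambda>s. indicator {0..t} s * c)" for c :: real
    using t by (intro integrable_mult_left) simp
  have "(LINT s|lborel. norm (F m s)) \<le> (LINT s|lborel. indicator {0..t} s * b m)" for m
    using F_int F_bound ind_int by (intro integral_mono) auto
  also have "(LINT s|lborel. indicator {0..t} s * b m) = t * b m" for m
    using t by (simp add: measure_def)
  finally have F_norm_summable: "summable (\<lambda>m. LINT s|lborel. norm (F m s))"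
    by (intro summable_comparison_test[OF _ summable_mult[OF b, of t]]) auto
  have g_summable: "summable (\<lambda>m. g m s)" for s
    using bound by (intro summable_comparison_test[OF _ b]) auto
  have F_summable: "AE s in lborel. summable (\<lambda>m. norm (F m s))"
    using F_bound by (intro AE_I2 summable_comparison_test[OF _ summable_mult[OF b]]) auto
  have "(LBINT s=0..t. (\<Sum>m. g m s)) = (LINT s|lborel. (\<Sum>m. F m s))"
    using t g_summable
    by (simp add: interval_integral_Icc zero_ereal_def set_lebesgue_integral_def F_def suminf_mult)
  also have "\<dots> = (\<Sum>m. LINT s|lborel. F m s)"
    by (rule integral_suminf[OF F_int F_summable F_norm_summable])
  also have "\<dots> = (\<Sum>m. integral {0..t} (g m))"
    using set_borel_integral_eq_integral(2)[OF set_integrable_Icc_bounded[OF meas bound]]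
    by (simp add: F_def set_lebesgue_integral_def)
  finally show ?thesis .
qed

lemma birk_ffun_eq_suminf:
  assumes a: "summable (\<lambda>n. \<bar>a n\<bar>)" and z: "z \<in> Mset" and t: "0 < t"
  shows "birk (ffun a d p) t z =
    (\<Sum>m. integral {0..t} (\<lambda>s. fprofile (a m) (d m) (p m) ((tower_height (p m) z + s) rmod 2 ^ p m))) / t"
proof -
  have "(LBINT s=0..t. ffun a d p (flow s z)) =
      (LBINT s=0..t. (\<Sum>m. fprofile (a m) (d m) (p m) ((tower_height (p m) z + s) rmod 2 ^ p m)))"
    using z t by (intro interval_integral_cong)
      (simp add: einterval_iff zero_ereal_def min_def max_def ffun_eq_suminf flow_in_Mset tower_height_flow)
  also have "\<dots> = (\<Sum>m. integral {0..t} (\<lambda>s. fprofile (a m) (d m) (p m) ((tower_height (p m) z + s) rmod 2 ^ p m)))"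
    using t a by (intro interval_integral_suminf[where b = "\<lambda>m. \<bar>a m\<bar>"]) (simp_all add: abs_fprofile_le)
  finally show ?thesis unfolding birk_def by simp
qed

lemma gap_sequence_le:
  fixes p :: "nat \<Rightarrow> nat"
  assumes "\<And>n. p n + 2 \<le> p (Suc n)" "m < n"
  shows "p m + 2 \<le> p n"
  using assms(2)
proof (induction n)
  case (Suc n)
  then show ?case using assms(1)[of n] by (cases "m < n") (auto simp: less_Suc_eq)
qed simp

lemma abs_suminf_le_term_plus_tail:
  fixes f b :: "nat \<Rightarrow> real"
  assumes "\<And>m. m < n \<Longrightarrow> f m = 0" "\<And>m. \<bar>f m\<bar> \<le> b m" "summable b"
  shows "\<bar>\<Sum>m. f m\<bar> \<le> \<bar>f n\<bar> + (\<Sum>j. b (j + Suc n))"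
proof -
  have "summable f" using assms(2,3) by (intro summable_comparison_test[of f b]) auto
  then have "(\<Sum>m. f m) = (\<Sum>j. f (j + Suc n)) + f n"
    using suminf_split_initial_segment[of f "Suc n"] assms(1) by simp
  moreover have "\<bar>\<Sum>j. f (j + Suc n)\<bar> \<le> (\<Sum>j. b (j + Suc n))"
  proof (rule norm_suminf_le[where f = "\<lambda>j. f (j + Suc n)", unfolded real_norm_def])
    show "summable (\<lambda>j. b (j + Suc n))"
      by (rule summable_ignore_initial_segment[OF assms(3)])
  qed (rule assms(2))
  ultimately show ?thesis by simp
qed

lemma abs_birk_ffun_le:
  fixes p :: "nat \<Rightarrow> nat" and a d :: "nat \<Rightarrow> real"
  assumes p_pos: "\<And>n. p n \<ge> 1" and p_gap: "\<And>n. p (Suc n) \<ge> p n + 2"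
    and d: "\<And>n. 0 < d n \<and> d n < 1" and a: "summable (\<lambda>n. \<bar>a n\<bar>)" and z: "z \<in> Mset"
  shows "\<bar>birk (ffun a d p) (2 powr (real (p n) - 2)) z\<bar> \<le> 8 * (\<bar>a n\<bar> * d n) + (\<Sum>m. \<bar>a (m + Suc n)\<bar>)"
proof -
  define t where "t = 2 powr (real (p n) - 2)"
  define I where "I m = integral {0..t} (\<lambda>s. fprofile (a m) (d m) (p m) ((tower_height (p m) z + s) rmod 2 ^ p m))"
    for m
  have t: "0 < t" unfolding t_def by simp
  have I_bound: "\<bar>I m\<bar> \<le> t * \<bar>a m\<bar>" for m
    unfolding I_def using t by (intro abs_integral_Icc_le) (simp_all add: abs_fprofile_le)
  have I_lower: "I m = 0" if "m < n" for m
  proof -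
    have le: "p m + 2 \<le> p n" using p_gap that by (rule gap_sequence_le)
    then have "t = 2 ^ (p n - 2)"
      unfolding t_def by (simp add: powr_realpow[symmetric])
    also have "\<dots> = 2 ^ p m * real (2 ^ (p n - 2 - p m))"
      using le by (simp flip: power_add)
    finally show ?thesis
      unfolding I_def using p_pos d
        integral_fprofile_flow_periods[where p = "p m" and k = "2 ^ (p n - 2 - p m)"] by simp
  qed
  have "\<bar>I n\<bar> \<le> 4 * \<bar>a n\<bar> * (d n * 2 powr (real (p n) - 1))"
    unfolding I_def t_def using p_pos d tower_height_range[OF z]
    by (intro abs_integral_fprofile_flow_le) auto
  also have "\<dots> = 8 * t * (\<bar>a n\<bar> * d n)"
    unfolding t_def by (simp add: powr_diff)
  finally have "\<bar>\<Sum>m. I m\<bar> \<le> 8 * t * (\<bar>a n\<bar> * d n) + (\<Sum>j. t * \<bar>a (j + Suc n)\<bar>)"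
    using abs_suminf_le_term_plus_tail[where n = n, OF I_lower I_bound summable_mult[OF a]] by simp
  also have "\<dots> = t * (8 * (\<bar>a n\<bar> * d n) + (\<Sum>j. \<bar>a (j + Suc n)\<bar>))"
    using suminf_mult[OF summable_ignore_initial_segment[OF a, of "Suc n"], of t]
    by (simp add: algebra_simps)
  finally have "\<bar>\<Sum>m. I m\<bar> \<le> t * (8 * (\<bar>a n\<bar> * d n) + (\<Sum>j. \<bar>a (j + Suc n)\<bar>))" .
  moreover have "birk (ffun a d p) t z = (\<Sum>m. I m) / t"
    unfolding I_def using birk_ffun_eq_suminf[OF a z t] .
  ultimately show ?thesis
    using t unfolding t_def[symmetric] by (simp add: divide_le_eq mult.commute)
qed

theorem theorem2:
  fixes p :: "nat \<Rightarrow> nat" and a d :: "nat \<Rightarrow> real"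
  assumes p_pos: "\<And>n. p n \<ge> 1"
    and p_gap: "\<And>n. p (Suc n) \<ge> p n + 2"
    and d_range: "\<And>n. 0 < d n \<and> d n < 1/2"
    and a_pos: "\<And>n. a n > 0"
    and a_summable: "summable a"
    and tail: "(\<lambda>n. \<Sum>m. a (m + Suc n)) \<in> o(\<lambda>n. a n * d n)"
    and cond: "\<And>n m. m > n \<Longrightarrow> 2 powr (real (p n) - 2) < d m * 2 powr (real (p m) - 1)"
  shows "integrable (lebesgue_on Mset) (ffun a d p)
         \<and> integral\<^sup>L (lebesgue_on Mset) (ffun a d p) = 0
         \<and> (\<exists>C. \<forall>\<^sub>F n in sequentially. \<forall>z\<in>Mset.
               \<bar>birk (ffun a d p) (2 powr (real (p n) - 2)) z\<bar> \<le> C * (a n * d n))"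
proof -
  have a_abs: "\<bar>a n\<bar> = a n" for n using a_pos[of n] by simp
  have a: "summable (\<lambda>n. \<bar>a n\<bar>)" using a_summable by (simp add: a_abs)
  have d: "0 < d n \<and> d n < 1" for n using d_range[of n] by simp
  have "\<forall>\<^sub>F n in sequentially. \<bar>\<Sum>m. a (m + Suc n)\<bar> \<le> 1 * \<bar>a n * d n\<bar>"
    using landau_o.smallD[OF tail, of 1] by simp
  then have "\<forall>\<^sub>F n in sequentially. \<forall>z\<in>Mset.
      \<bar>birk (ffun a d p) (2 powr (real (p n) - 2)) z\<bar> \<le> 9 * (a n * d n)"
  proof (rule eventually_mono, intro ballI)
    fix n z
    assume "\<bar>\<Sum>m. a (m + Suc n)\<bar> \<le> 1 * \<bar>a n * d n\<bar>" and "z \<in> Mset"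
    then show "\<bar>birk (ffun a d p) (2 powr (real (p n) - 2)) z\<bar> \<le> 9 * (a n * d n)"
      using abs_birk_ffun_le[where p = p and d = d and a = a, OF p_pos p_gap d a, of z n] a_pos[of n] d[of n] by (simp add: a_abs)
  qed
  then show ?thesis using ffun_integrable_mean_zero[where p = p and d = d and a = a, OF p_pos d a] by blast
qed

end
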